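(* Let $(X,\mathcal{A},\mu)$ be a probability space and $f:X\to X$ a measurable map with $f\mu=\mu$. Consider the nonautonomous system with $X_n=X$, $f_n=f$, $\mu_n=\mu$ for all $n$, and let $\mathcal{F}$ be the set of all constant sequences $\mathcal{P}_n\equiv\mathcal{P}$ of finite measurable partitions $\mathcal{P}$ of $X$. Then $h_{\mathcal{E}(\mathcal{F})}(f_{1,\infty})=h_\mu(f)$, where $h_\mu(f)$ is the classical Kolmogorov–Sinai entropy.
   Context: For a sequence $\{\mathcal{P}_n\}$ of finite measurable partitions, $h(f_{1,\infty};\mathcal{P}_{1,\infty})=\limsup_n\frac1nH_{\mu}(\bigvee_{i=0}^{n-1}f^{-i}\mathcal{P}_{i+1})$, $H_\mu(\mathcal{P})=-\sum_P\mu(P)\log\mu(P)$; $h_{\mathcal{E}}(f_{1,\infty})=\sup_{\mathcal{P}_{1,\infty}\in\mathcal{E}}h(f_{1,\infty};\mathcal{P}_{1,\infty})$. An admissible class is a nonempty class $\mathcal{E}$ of sequences of finite measurable partitions such that (A) each member has uniformly bounded cardinalities; (B) it is closed under passing to termwise coarser sequences; (C) $\mathcal{P}_{1,\infty}\in\mathcal{E}$, $m\ge1$ imply $\{\bigvee_{i=0}^{m-1}f_k^{-i}\mathcal{P}_{k+i}\}_{k\ge1}\in\mathcal{E}$ where $f_k^{-i}$ is the preimage under $f_{k+i-1}\circ\cdots\circ f_k$. $\mathcal{E}(\mathcal{F})$ is the smallest admissible class containing $\mathcal{F}$ (the intersection of all admissible classes containing $\mathcal{F}$). *)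

theory Defs
  imports "HOL-Probability.Probability"
begin

text \<open>Finite measurable partitions of the space of M (empty cells are harmless
  for entropy and are allowed).\<close>
definition fmpart :: "'a measure \<Rightarrow> 'a set set \<Rightarrow> bool" where
  "fmpart M P \<longleftrightarrow> finite P \<and> P \<subseteq> sets M \<and> disjoint P \<and> \<Union>P = space M"

definition part_entropy :: "'a measure \<Rightarrow> 'a set set \<Rightarrow> real" where
  "part_entropy M P = - (\<Sum>A\<in>P. measure M A * ln (measure M A))"

definition part_pre :: "'a measure \<Rightarrow> ('a \<Rightarrow> 'a) \<Rightarrow> 'a set set \<Rightarrow> 'a set set" where
  "part_pre M g P = {g -` A \<inter> space M | A. A \<in> P}"

definition part_join :: "'a set set \<Rightarrow> 'a set set \<Rightarrow> 'a set set" where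
  "part_join P Q = {A \<inter> B | A B. A \<in> P \<and> B \<in> Q}"

fun join_upto :: "'a measure \<Rightarrow> nat \<Rightarrow> (nat \<Rightarrow> 'a set set) \<Rightarrow> 'a set set" where
  "join_upto M 0 Q = {space M}"
| "join_upto M (Suc n) Q = part_join (join_upto M n Q) (Q n)"

text \<open>Sequences are 0-indexed: fs k stands for f_{k+1}, Ps k for P_{k+1}.
  compo fs k i = fs (k+i-1) o ... o fs k (identity for i = 0).\<close>
fun compo :: "(nat \<Rightarrow> 'a \<Rightarrow> 'a) \<Rightarrow> nat \<Rightarrow> nat \<Rightarrow> 'a \<Rightarrow> 'a" where
  "compo fs k 0 = id"
| "compo fs k (Suc i) = fs (k + i) \<circ> compo fs k i"

definition dyn_join :: "'a measure \<Rightarrow> (nat \<Rightarrow> 'a \<Rightarrow> 'a) \<Rightarrow> (nat \<Rightarrow> 'a set set) \<Rightarrow> nat \<Rightarrow> nat \<Rightarrow> 'a set set" where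
  "dyn_join M fs Ps k n = join_upto M n (\<lambda>i. part_pre M (compo fs k i) (Ps (k + i)))"

definition na_entropy_seq :: "'a measure \<Rightarrow> (nat \<Rightarrow> 'a \<Rightarrow> 'a) \<Rightarrow> (nat \<Rightarrow> 'a set set) \<Rightarrow> ereal" where
  "na_entropy_seq M fs Ps =
     limsup (\<lambda>n. ereal (part_entropy M (dyn_join M fs Ps 0 n) / real n))"

definition na_entropy_class :: "'a measure \<Rightarrow> (nat \<Rightarrow> 'a \<Rightarrow> 'a) \<Rightarrow> (nat \<Rightarrow> 'a set set) set \<Rightarrow> ereal" where
  "na_entropy_class M fs E = (SUP Ps\<in>E. na_entropy_seq M fs Ps)"

definition coarser :: "'a set set \<Rightarrow> 'a set set \<Rightarrow> bool" where
  "coarser Q P \<longleftrightarrow> (\<forall>A\<in>P. \<exists>B\<in>Q. A \<subseteq> B)"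

definition admissible :: "'a measure \<Rightarrow> (nat \<Rightarrow> 'a \<Rightarrow> 'a) \<Rightarrow> (nat \<Rightarrow> 'a set set) set \<Rightarrow> bool" where
  "admissible M fs E \<longleftrightarrow>
     E \<noteq> {} \<and>
     (\<forall>Ps\<in>E. \<forall>n. fmpart M (Ps n)) \<and>
     (\<forall>Ps\<in>E. \<exists>B::nat. \<forall>n. card (Ps n) \<le> B) \<and>
     (\<forall>Ps\<in>E. \<forall>Qs. (\<forall>n. fmpart M (Qs n) \<and> coarser (Qs n) (Ps n)) \<longrightarrow> Qs \<in> E) \<and>
     (\<forall>Ps\<in>E. \<forall>m\<ge>1. (\<lambda>k. dyn_join M fs Ps k m) \<in> E)"

definition gen_class :: "'a measure \<Rightarrow> (nat \<Rightarrow> 'a \<Rightarrow> 'a) \<Rightarrow> (nat \<Rightarrow> 'a set set) set \<Rightarrow> (nat \<Rightarrow> 'a set set) set" where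
  "gen_class M fs F = \<Inter>{E. admissible M fs E \<and> F \<subseteq> E}"

definition ks_entropy_part :: "'a measure \<Rightarrow> ('a \<Rightarrow> 'a) \<Rightarrow> 'a set set \<Rightarrow> real" where
  "ks_entropy_part M f P =
     lim (\<lambda>n. part_entropy M (join_upto M n (\<lambda>i. part_pre M (f ^^ i) P)) / real n)"

definition ks_entropy :: "'a measure \<Rightarrow> ('a \<Rightarrow> 'a) \<Rightarrow> ereal" where
  "ks_entropy M f = (SUP P\<in>{P. fmpart M P}. ereal (ks_entropy_part M f P))"

end

theory Submission
  imports Defs
begin

text \<open>For a constant sequence \<open>P\<^sub>n = P\<close> the dynamical joins are the classical joins
  \<open>P \<or> f^-1 P \<or> \<dots> \<or> f^-(n-1) P\<close>. Since \<open>f\<close> preserves the measure, their entropies are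
  subadditive in \<open>n\<close>, so by Fekete's lemma the limsup defining the nonautonomous entropy is
  the limit \<open>h(f, P)\<close>; this gives \<open>\<ge>\<close>. For \<open>\<le>\<close>, the sequences that are termwise coarser
  than one fixed join \<open>Q \<or> \<dots> \<or> f^-(m-1) Q\<close> form an admissible class containing the constant
  sequences, hence containing the generated class. The \<open>n\<close>-th dynamical join of such a
  sequence is coarser than \<open>Q \<or> \<dots> \<or> f^-(n+m-1) Q\<close>, so its entropy rate is at most
  \<open>h(f, Q)\<close>.\<close>

lemma subadditive_le_mult_add:
  fixes a :: "nat \<Rightarrow> real"
  assumes sub: "\<And>n m. a (n + m) \<le> a n + a m"
  shows "a (q * k + r) \<le> real q * a k + a r"
proof (induction q)
  case (Suc q)
  have "a (Suc q * k + r) = a (k + (q * k + r))" by (simp add: algebra_simps)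
  also have "\<dots> \<le> a k + a (q * k + r)" by (rule sub)
  also have "\<dots> \<le> a k + (real q * a k + a r)" using Suc by simp
  finally show ?case by (simp add: algebra_simps)
qed simp

lemma subadditive_quotient_le:
  fixes a :: "nat \<Rightarrow> real"
  assumes nonneg: "\<And>n. a n \<ge> 0" and sub: "\<And>n m. a (n + m) \<le> a n + a m"
    and k: "k \<ge> 1" and n: "n \<ge> 1"
  shows "a n / n \<le> a k / k + (\<Sum>r<k. a r) / n"
proof -
  define q r where "q = n div k" and "r = n mod k"
  have n_eq: "n = q * k + r" and "r < k" using k by (auto simp: q_def r_def)
  then have "a r \<le> (\<Sum>r<k. a r)" using nonneg by (intro member_le_sum) auto
  then have "a n \<le> real q * a k + (\<Sum>r<k. a r)"
    using subadditive_le_mult_add[OF sub, of q k r] n_eq by simp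
  moreover have "real q * a k \<le> real n * (a k / k)"
  proof -
    have "real q * a k = real (q * k) * (a k / k)" using k by simp
    also have "\<dots> \<le> real n * (a k / k)"
      using n_eq nonneg[of k] by (intro mult_right_mono) auto
    finally show ?thesis .
  qed
  ultimately have "a n \<le> real n * (a k / k) + (\<Sum>r<k. a r)" by linarith
  then show ?thesis using n by (simp add: field_simps)
qed

lemma subadditive_convergent_quotient:
  fixes a :: "nat \<Rightarrow> real"
  assumes nonneg: "\<And>n. a n \<ge> 0" and sub: "\<And>n m. a (n + m) \<le> a n + a m"
  shows "convergent (\<lambda>n. a n / n)"
proof -
  define S where "S = (\<lambda>n. a n / real n) ` {1..}"
  have "S \<noteq> {}" and bdd: "bdd_below S"
    unfolding S_def using nonneg by (auto intro!: bdd_belowI[of _ 0])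
  have lower: "Inf S \<le> a n / n" if "n \<ge> 1" for n
    using bdd that by (intro cInf_lower) (auto simp: S_def)
  have "(\<lambda>n. a n / n) \<longlonglongrightarrow> Inf S"
  proof (rule order_tendstoI)
    fix y assume "y < Inf S"
    then show "\<forall>\<^sub>F n in sequentially. y < a n / n"
      using lower by (intro eventually_sequentiallyI[of 1]) fastforce
  next
    fix y assume "Inf S < y"
    then obtain k where k: "k \<ge> 1" "a k / k < y"
      using cInf_less_iff[OF \<open>S \<noteq> {}\<close> bdd] unfolding S_def by auto
    have "\<forall>\<^sub>F n in sequentially. (\<Sum>r<k. a r) / n < y - a k / k"
      using k by (intro order_tendstoD(2)[OF lim_const_over_n]) simp
    then show "\<forall>\<^sub>F n in sequentially. a n / n < y"
      using eventually_ge_at_top[of 1] by eventually_elim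
        (use subadditive_quotient_le[OF nonneg sub k(1)] in fastforce)
  qed
  then show ?thesis by (rule convergentI)
qed

lemma mult_ln_le_mult_ln: "0 \<le> (p::real) \<Longrightarrow> p \<le> a \<Longrightarrow> p * ln p \<le> p * ln a"
  by (cases "p = 0") (auto intro!: mult_left_mono)

text \<open>This is \<open>ln x \<le> x - 1\<close> at \<open>x = a b / p\<close>; summed over the cells \<open>A \<inter> B\<close> of a join,
  with \<open>a = \<mu> A\<close> and \<open>b = \<mu> B\<close>, the last two terms cancel and subadditivity of entropy remains.\<close>
lemma neg_mult_ln_le:
  fixes p a b :: real
  assumes "0 \<le> p" "p \<le> a" "p \<le> b"
  shows "- (p * ln p) \<le> - (p * ln a) - (p * ln b) + a * b - p"
proof (cases "p = 0")
  case False
  then have pos: "p > 0" "a > 0" "b > 0" using assms by auto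
  have "p * ln (a * b / p) \<le> p * (a * b / p - 1)"
    using pos by (intro mult_left_mono ln_le_minus_one) auto
  moreover have "ln (a * b / p) = ln a + ln b - ln p" using pos by (simp add: ln_mult ln_div)
  ultimately show ?thesis using pos by (simp add: algebra_simps)
qed (use assms in simp)

lemma part_pre_image: "part_pre M g P = (\<lambda>A. g -` A \<inter> space M) ` P"
  unfolding part_pre_def by auto

lemma part_join_image: "part_join P Q = (\<lambda>(A, B). A \<inter> B) ` (P \<times> Q)"
  unfolding part_join_def by auto

lemma coarser_refl: "coarser P P"
  unfolding coarser_def by auto

lemma coarser_trans: "coarser P Q \<Longrightarrow> coarser Q R \<Longrightarrow> coarser P R"
  unfolding coarser_def by (meson order_trans)

lemma coarser_part_join_left: "coarser P (part_join P Q)"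
  unfolding coarser_def part_join_def by auto

lemma coarser_part_join_right: "coarser Q (part_join P Q)"
  unfolding coarser_def part_join_def by auto

lemma coarser_part_join_mono:
  assumes "coarser P P'" "coarser Q Q'"
  shows "coarser (part_join P Q) (part_join P' Q')"
  unfolding coarser_def part_join_image
proof
  fix C assume "C \<in> (\<lambda>(A, B). A \<inter> B) ` (P' \<times> Q')"
  then obtain A B X Y where "C = A \<inter> B" "X \<in> P" "A \<subseteq> X" "Y \<in> Q" "B \<subseteq> Y"
    using assms unfolding coarser_def by fast
  then show "\<exists>D\<in>(\<lambda>(A, B). A \<inter> B) ` (P \<times> Q). C \<subseteq> D"
    by (intro bexI[of _ "X \<inter> Y"]) auto
qed

lemma coarser_part_pre_mono:
  assumes "coarser P Q" shows "coarser (part_pre M g P) (part_pre M g Q)"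
  unfolding coarser_def part_pre_image
proof
  fix C assume "C \<in> (\<lambda>A. g -` A \<inter> space M) ` Q"
  then obtain B A where "C = g -` B \<inter> space M" "A \<in> P" "B \<subseteq> A"
    using assms unfolding coarser_def by blast
  then show "\<exists>D\<in>(\<lambda>A. g -` A \<inter> space M) ` P. C \<subseteq> D"
    by (intro bexI[of _ "g -` A \<inter> space M"]) auto
qed

lemma coarser_join_upto_mono:
  "(\<And>i. i < n \<Longrightarrow> coarser (Q i) (Q' i)) \<Longrightarrow> coarser (join_upto M n Q) (join_upto M n Q')"
  by (induction n) (auto simp: coarser_refl intro: coarser_part_join_mono)

lemma coarser_join_upto: "i < n \<Longrightarrow> coarser (Q i) (join_upto M n Q)"
proof (induction n)
  case (Suc n)
  then show ?case
    by (auto simp: less_Suc_eq intro: coarser_trans coarser_part_join_left coarser_part_join_right)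
qed simp

lemma join_upto_coarser:
  assumes "\<Union>R \<subseteq> space M" and "\<And>i. i < n \<Longrightarrow> coarser (Q i) R"
  shows "coarser (join_upto M n Q) R"
  using assms(2)
proof (induction n)
  case 0
  then show ?case using assms(1) unfolding coarser_def by auto
next
  case (Suc n)
  show ?case unfolding coarser_def
  proof
    fix A assume "A \<in> R"
    then obtain X Y where "X \<in> join_upto M n Q" "Y \<in> Q n" "A \<subseteq> X" "A \<subseteq> Y"
      using Suc unfolding coarser_def by (meson less_Suc_eq)
    then show "\<exists>B\<in>join_upto M (Suc n) Q. A \<subseteq> B"
      by (intro bexI[of _ "X \<inter> Y"]) (auto simp: part_join_def)
  qed
qed

lemma part_pre_comp:
  "(\<And>x. x \<in> space M \<Longrightarrow> h x \<in> space M) \<Longrightarrow>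
    part_pre M h (part_pre M g P) = part_pre M (g \<circ> h) P"
proof -
  assume "\<And>x. x \<in> space M \<Longrightarrow> h x \<in> space M"
  then have "(g \<circ> h) -` A \<inter> space M = h -` (g -` A \<inter> space M) \<inter> space M" for A by auto
  then show ?thesis by (simp add: part_pre_image image_image)
qed

lemma fmpart_space: "fmpart M {space M}"
  unfolding fmpart_def disjoint_def by auto

lemma fmpart_subset_space: "fmpart M P \<Longrightarrow> A \<in> P \<Longrightarrow> A \<subseteq> space M"
  unfolding fmpart_def by auto

lemma fmpart_sets: "fmpart M P \<Longrightarrow> A \<in> P \<Longrightarrow> A \<in> sets M"
  unfolding fmpart_def by auto

lemma fmpart_disjointD: "fmpart M P \<Longrightarrow> A \<in> P \<Longrightarrow> B \<in> P \<Longrightarrow> A \<noteq> B \<Longrightarrow> A \<inter> B = {}"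
  unfolding fmpart_def disjoint_def by auto

lemma fmpart_part_join:
  assumes P: "fmpart M P" and Q: "fmpart M Q"
  shows "fmpart M (part_join P Q)"
  unfolding fmpart_def
proof (intro conjI)
  show "finite (part_join P Q)" using P Q unfolding part_join_image fmpart_def by auto
  show "part_join P Q \<subseteq> sets M"
    using fmpart_sets[OF P] fmpart_sets[OF Q] unfolding part_join_def by auto
  show "disjoint (part_join P Q)"
    unfolding disjoint_def part_join_def using fmpart_disjointD[OF P] fmpart_disjointD[OF Q] by blast
  show "\<Union>(part_join P Q) = space M"
    using P Q unfolding part_join_def fmpart_def by blast
qed

lemma fmpart_join_upto: "(\<And>i. i < n \<Longrightarrow> fmpart M (Q i)) \<Longrightarrow> fmpart M (join_upto M n Q)"
  by (induction n) (auto intro: fmpart_part_join fmpart_space)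

lemma fmpart_part_pre:
  assumes g: "g \<in> M \<rightarrow>\<^sub>M M" and P: "fmpart M P"
  shows "fmpart M (part_pre M g P)"
  unfolding fmpart_def part_pre_image
proof (intro conjI)
  show "finite ((\<lambda>A. g -` A \<inter> space M) ` P)" using P unfolding fmpart_def by auto
  show "(\<lambda>A. g -` A \<inter> space M) ` P \<subseteq> sets M"
    using fmpart_sets[OF P] g by (auto intro: measurable_sets)
  show "disjoint ((\<lambda>A. g -` A \<inter> space M) ` P)"
    unfolding disjoint_def
  proof (intro ballI impI)
    fix X Y assume "X \<in> (\<lambda>A. g -` A \<inter> space M) ` P" "Y \<in> (\<lambda>A. g -` A \<inter> space M) ` P" "X \<noteq> Y"
    then obtain A B where "A \<in> P" "B \<in> P" "A \<noteq> B" "X = g -` A \<inter> space M" "Y = g -` B \<inter> space M"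
      by blast
    then show "X \<inter> Y = {}" using fmpart_disjointD[OF P] by auto
  qed
  have "\<Union>((\<lambda>A. g -` A \<inter> space M) ` P) = g -` (\<Union>P) \<inter> space M" by auto
  also have "\<dots> = space M" using P measurable_space[OF g] unfolding fmpart_def by auto
  finally show "\<Union>((\<lambda>A. g -` A \<inter> space M) ` P) = space M" .
qed

text \<open>The extra cell accounts for the empty set, which a partition may contain.\<close>
lemma card_le_Suc_card_if_coarser:
  assumes Q: "fmpart M Q" and P: "fmpart M P" and "coarser Q P"
  shows "card Q \<le> Suc (card P)"
proof -
  obtain h where h: "\<And>A. A \<in> P \<Longrightarrow> h A \<in> Q \<and> A \<subseteq> h A"
    using \<open>coarser Q P\<close> unfolding coarser_def by (metis (no_types))
  have "Q \<subseteq> insert {} (h ` P)"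
  proof
    fix B assume B: "B \<in> Q"
    show "B \<in> insert {} (h ` P)"
    proof (cases "B = {}")
      case False
      then obtain x where x: "x \<in> B" by auto
      then have "x \<in> \<Union>P" using P fmpart_subset_space[OF Q B] unfolding fmpart_def by auto
      then obtain A where A: "A \<in> P" "x \<in> A" by blast
      then have "x \<in> h A" "h A \<in> Q" using h by auto
      then have "h A = B" using fmpart_disjointD[OF Q _ B] x by blast
      then show ?thesis using A by auto
    qed simp
  qed
  then have "card Q \<le> card (insert {} (h ` P))"
    using P by (intro card_mono) (auto simp: fmpart_def)
  also have "\<dots> \<le> Suc (card (h ` P))" by (simp add: card_insert_le_m1 card_insert_if)
  also have "\<dots> \<le> Suc (card P)" using card_image_le P by (auto simp: fmpart_def)
  finally show ?thesis .
qed

lemma part_pre_part_join: "part_pre M h (part_join P Q) = part_join (part_pre M h P) (part_pre M h Q)"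
proof (intro set_eqI iffI)
  fix C assume "C \<in> part_pre M h (part_join P Q)"
  then obtain A B where AB: "A \<in> P" "B \<in> Q" "C = h -` (A \<inter> B) \<inter> space M"
    unfolding part_pre_def part_join_def by blast
  have "h -` A \<inter> space M \<in> part_pre M h P" "h -` B \<inter> space M \<in> part_pre M h Q"
    using AB unfolding part_pre_def by blast+
  moreover have "C = (h -` A \<inter> space M) \<inter> (h -` B \<inter> space M)" using AB by auto
  ultimately show "C \<in> part_join (part_pre M h P) (part_pre M h Q)" unfolding part_join_def by blast
next
  fix C assume "C \<in> part_join (part_pre M h P) (part_pre M h Q)"
  then obtain A B where AB: "A \<in> P" "B \<in> Q" "C = (h -` A \<inter> space M) \<inter> (h -` B \<inter> space M)"
    unfolding part_pre_def part_join_def by blast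
  have "A \<inter> B \<in> part_join P Q" using AB unfolding part_join_def by blast
  moreover have "C = h -` (A \<inter> B) \<inter> space M" using AB by auto
  ultimately show "C \<in> part_pre M h (part_join P Q)" unfolding part_pre_def by blast
qed

lemma part_pre_join_upto:
  assumes "\<And>x. x \<in> space M \<Longrightarrow> h x \<in> space M"
  shows "part_pre M h (join_upto M n Q) = join_upto M n (\<lambda>j. part_pre M h (Q j))"
proof (induction n)
  case 0 then show ?case unfolding part_pre_def using assms by auto
next
  case (Suc n) then show ?case by (simp add: part_pre_part_join)
qed

lemma part_entropy_part_pre:
  assumes P: "fmpart M P"
    and preserving: "\<And>A. A \<in> sets M \<Longrightarrow> measure M (g -` A \<inter> space M) = measure M A"
  shows "part_entropy M (part_pre M g P) = part_entropy M P"
proof -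
  let ?h = "\<lambda>C. measure M C * ln (measure M C)"
  have "(\<Sum>C\<in>part_pre M g P. ?h C) = (\<Sum>A\<in>P. ?h (g -` A \<inter> space M))"
    unfolding part_pre_image
  proof (subst sum.reindex_nontrivial)
    show "finite P" using P by (simp add: fmpart_def)
  next
    fix A B assume AB: "A \<in> P" "B \<in> P" "A \<noteq> B" "g -` A \<inter> space M = g -` B \<inter> space M"
    then have "A \<inter> B = {}" using fmpart_disjointD[OF P] by auto
    then have "g -` A \<inter> space M = {}" using AB by auto
    then show "?h (g -` A \<inter> space M) = 0" by simp
  qed (simp add: comp_def)
  also have "\<dots> = (\<Sum>A\<in>P. ?h A)" using preserving fmpart_sets[OF P] by simp
  finally show ?thesis unfolding part_entropy_def by simp
qed

lemma sum_cells_inter_subset_cell: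
  fixes \<phi> :: "'a set \<Rightarrow> 'b::comm_monoid_add"
  assumes P: "fmpart M P" and "A0 \<in> P" "B \<subseteq> A0" "\<phi> {} = 0"
  shows "(\<Sum>A\<in>P. \<phi> (A \<inter> B)) = \<phi> B"
proof -
  have "(\<Sum>A\<in>P. \<phi> (A \<inter> B)) = \<phi> (A0 \<inter> B) + (\<Sum>A\<in>P - {A0}. \<phi> (A \<inter> B))"
    using assms by (simp add: sum.remove fmpart_def)
  also have "(\<Sum>A\<in>P - {A0}. \<phi> (A \<inter> B)) = 0"
  proof (intro sum.neutral ballI)
    fix A assume "A \<in> P - {A0}"
    then have "A \<inter> A0 = {}" using fmpart_disjointD[OF P _ \<open>A0 \<in> P\<close>] by auto
    then have "A \<inter> B = {}" using \<open>B \<subseteq> A0\<close> by auto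
    then show "\<phi> (A \<inter> B) = 0" using \<open>\<phi> {} = 0\<close> by simp
  qed
  finally show ?thesis using assms by (simp add: Int_absorb1)
qed

lemma part_entropy_part_join:
  assumes P: "fmpart M P" and Q: "fmpart M Q"
  shows "part_entropy M (part_join P Q) =
    - (\<Sum>A\<in>P. \<Sum>B\<in>Q. measure M (A \<inter> B) * ln (measure M (A \<inter> B)))"
proof -
  let ?h = "\<lambda>C. measure M C * ln (measure M C)"
  have "(\<Sum>C\<in>part_join P Q. ?h C) = (\<Sum>(A, B)\<in>P \<times> Q. ?h (A \<inter> B))"
    unfolding part_join_image
  proof (subst sum.reindex_nontrivial)
    show "finite (P \<times> Q)" using P Q by (simp add: fmpart_def)
  next
    fix x y assume xy: "x \<in> P \<times> Q" "y \<in> P \<times> Q" "x \<noteq> y"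
      and eq: "(\<lambda>(A, B). A \<inter> B) x = (\<lambda>(A, B). A \<inter> B) y"
    obtain A B A' B' where x: "x = (A, B)" and y: "y = (A', B')" by force
    have "A \<inter> A' = {} \<or> B \<inter> B' = {}"
      using xy fmpart_disjointD[OF P, of A A'] fmpart_disjointD[OF Q, of B B'] x y by auto
    then have "A \<inter> B = {}" using eq x y by auto
    then show "?h ((\<lambda>(A, B). A \<inter> B) x) = 0" using x by simp
  qed (simp add: case_prod_unfold comp_def)
  also have "\<dots> = (\<Sum>A\<in>P. \<Sum>B\<in>Q. ?h (A \<inter> B))" by (simp add: sum.cartesian_product)
  finally show ?thesis unfolding part_entropy_def by simp
qed

context prob_space
begin

lemma measure_eq_sum_cells:
  assumes P: "fmpart M P" and C: "C \<in> sets M"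
  shows "measure M C = (\<Sum>A\<in>P. measure M (C \<inter> A))"
proof -
  have "C = (\<Union>A\<in>P. C \<inter> A)" using P sets.sets_into_space[OF C] unfolding fmpart_def by auto
  then have "measure M C = measure M (\<Union>A\<in>P. C \<inter> A)" by simp
  also have "\<dots> = (\<Sum>A\<in>P. measure M (C \<inter> A))"
    using P C fmpart_disjointD[OF P]
    by (intro finite_measure_finite_Union) (auto simp: fmpart_def disjoint_family_on_def)
  finally show ?thesis .
qed

lemma sum_measure_cells: "fmpart M P \<Longrightarrow> (\<Sum>A\<in>P. measure M A) = 1"
  using measure_eq_sum_cells[of P "space M"] fmpart_subset_space[of M P]
  by (simp add: prob_space Int_absorb1)

lemma part_entropy_nonneg: "part_entropy M P \<ge> 0"
proof -
  have "measure M A * ln (measure M A) \<le> 0" for A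
  proof (cases "measure M A = 0")
    case False
    then have "measure M A > 0" by (simp add: zero_less_measure_iff)
    then show ?thesis using prob_le_1[of A] by (simp add: mult_nonneg_nonpos)
  qed simp
  then show ?thesis unfolding part_entropy_def by (simp add: sum_nonpos)
qed

lemma part_entropy_mono:
  assumes P: "fmpart M P" and R: "fmpart M R" and "coarser P R"
  shows "part_entropy M P \<le> part_entropy M R"
proof -
  let ?h = "\<lambda>C. measure M C * ln (measure M C)"
  have "(\<Sum>B\<in>R. ?h B) = (\<Sum>B\<in>R. \<Sum>A\<in>P. ?h (A \<inter> B))"
  proof (rule sum.cong[OF refl])
    fix B assume "B \<in> R"
    then obtain A0 where "A0 \<in> P" "B \<subseteq> A0" using \<open>coarser P R\<close> unfolding coarser_def by auto
    then show "?h B = (\<Sum>A\<in>P. ?h (A \<inter> B))"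
      by (intro sum_cells_inter_subset_cell[OF P, symmetric]) simp_all
  qed
  also have "\<dots> = (\<Sum>A\<in>P. \<Sum>B\<in>R. ?h (A \<inter> B))" by (rule sum.swap)
  also have "\<dots> \<le> (\<Sum>A\<in>P. ?h A)"
  proof (rule sum_mono)
    fix A assume A: "A \<in> P"
    have "(\<Sum>B\<in>R. ?h (A \<inter> B)) \<le> (\<Sum>B\<in>R. measure M (A \<inter> B) * ln (measure M A))"
      by (intro sum_mono mult_ln_le_mult_ln) (auto intro!: finite_measure_mono fmpart_sets[OF P A])
    also have "\<dots> = ?h A"
      using measure_eq_sum_cells[OF R fmpart_sets[OF P A]] by (simp add: sum_distrib_right)
    finally show "(\<Sum>B\<in>R. ?h (A \<inter> B)) \<le> ?h A" .
  qed
  finally show ?thesis unfolding part_entropy_def by simp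
qed

lemma part_entropy_part_join_le:
  assumes P: "fmpart M P" and Q: "fmpart M Q"
  shows "part_entropy M (part_join P Q) \<le> part_entropy M P + part_entropy M Q"
proof -
  let ?p = "\<lambda>A B. measure M (A \<inter> B)"
  have H_P: "(\<Sum>A\<in>P. \<Sum>B\<in>Q. ?p A B * ln (measure M A)) = - part_entropy M P"
    using measure_eq_sum_cells[OF Q fmpart_sets[OF P]]
    by (simp add: part_entropy_def sum_distrib_right[symmetric])
  have "(\<Sum>A\<in>P. \<Sum>B\<in>Q. ?p A B * ln (measure M B)) = (\<Sum>B\<in>Q. \<Sum>A\<in>P. ?p B A * ln (measure M B))"
    by (subst sum.swap) (simp add: Int_commute)
  also have "\<dots> = - part_entropy M Q"
    using measure_eq_sum_cells[OF P fmpart_sets[OF Q]]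
    by (simp add: part_entropy_def sum_distrib_right[symmetric])
  finally have H_Q: "(\<Sum>A\<in>P. \<Sum>B\<in>Q. ?p A B * ln (measure M B)) = - part_entropy M Q" .
  have product_mass: "(\<Sum>A\<in>P. \<Sum>B\<in>Q. measure M A * measure M B) = 1"
    using sum_measure_cells[OF P] sum_measure_cells[OF Q] by (simp add: sum_product[symmetric])
  have join_mass: "(\<Sum>A\<in>P. \<Sum>B\<in>Q. ?p A B) = 1"
    using sum_measure_cells[OF P] measure_eq_sum_cells[OF Q fmpart_sets[OF P]] by simp
  have "part_entropy M (part_join P Q) \<le> (\<Sum>A\<in>P. \<Sum>B\<in>Q.
      - (?p A B * ln (measure M A)) - ?p A B * ln (measure M B) + measure M A * measure M B - ?p A B)"
    unfolding part_entropy_part_join[OF P Q] sum_negf[symmetric]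
    using fmpart_sets[OF P] fmpart_sets[OF Q]
    by (intro sum_mono neg_mult_ln_le) (auto intro!: finite_measure_mono)
  also have "\<dots> = part_entropy M P + part_entropy M Q"
    by (simp add: sum.distrib sum_subtractf sum_negf H_P H_Q product_mass join_mass)
  finally show ?thesis .
qed

end

definition iter_join :: "'a measure \<Rightarrow> ('a \<Rightarrow> 'a) \<Rightarrow> 'a set set \<Rightarrow> nat \<Rightarrow> 'a set set" where
  "iter_join M f P n = join_upto M n (\<lambda>i. part_pre M (f ^^ i) P)"

lemma ks_entropy_part_eq_lim: "ks_entropy_part M f P = lim (\<lambda>n. part_entropy M (iter_join M f P n) / n)"
  unfolding ks_entropy_part_def iter_join_def ..

lemma compo_const_map: "compo (\<lambda>_. f) k i = f ^^ i"
  by (induction i) auto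

lemma dyn_join_const_map:
  "dyn_join M (\<lambda>_. f) Ps k m = join_upto M m (\<lambda>i. part_pre M (f ^^ i) (Ps (k + i)))"
  unfolding dyn_join_def by (simp add: compo_const_map)

locale measure_preserving_system = prob_space +
  fixes f :: "'a \<Rightarrow> 'a"
  assumes measurable_f: "f \<in> M \<rightarrow>\<^sub>M M" and distr_f: "distr M M f = M"
begin

lemma measurable_funpow: "f ^^ i \<in> M \<rightarrow>\<^sub>M M"
proof (induction i)
  case 0 show ?case using measurable_id[of M] by (simp add: id_def)
next
  case (Suc i) show ?case unfolding funpow.simps by (rule measurable_comp[OF Suc measurable_f])
qed

lemma funpow_in_space: "x \<in> space M \<Longrightarrow> (f ^^ i) x \<in> space M"
  using measurable_funpow by (rule measurable_space)

lemma measure_funpow_vimage: "A \<in> sets M \<Longrightarrow> measure M ((f ^^ i) -` A \<inter> space M) = measure M A"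
proof (induction i)
  case (Suc i)
  have "(f ^^ Suc i) -` A \<inter> space M = f -` ((f ^^ i) -` A \<inter> space M) \<inter> space M"
    unfolding funpow_Suc_right using measurable_space[OF measurable_f] by auto
  also have "measure M \<dots> = measure M ((f ^^ i) -` A \<inter> space M)"
    using measure_distr[OF measurable_f measurable_sets[OF measurable_funpow Suc.prems]] distr_f
    by simp
  also have "\<dots> = measure M A" using Suc .
  finally show ?case .
qed (simp add: Int_absorb2 sets.sets_into_space)

lemma fmpart_iter_join: "fmpart M P \<Longrightarrow> fmpart M (iter_join M f P n)"
  unfolding iter_join_def by (intro fmpart_join_upto fmpart_part_pre[OF measurable_funpow])

lemma part_pre_iter_join:
  "part_pre M (f ^^ n) (iter_join M f P m) = join_upto M m (\<lambda>j. part_pre M (f ^^ (j + n)) P)"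
  unfolding iter_join_def
  by (simp add: part_pre_join_upto part_pre_comp funpow_in_space funpow_add)

lemma iter_join_add_coarser:
  assumes P: "fmpart M P"
  shows "coarser (iter_join M f P (n + m))
    (part_join (iter_join M f P n) (part_pre M (f ^^ n) (iter_join M f P m)))"
  unfolding iter_join_def[of M f P "n + m"]
proof (rule join_upto_coarser)
  show "\<Union>(part_join (iter_join M f P n) (part_pre M (f ^^ n) (iter_join M f P m))) \<subseteq> space M"
    using fmpart_part_join[OF fmpart_iter_join[OF P] fmpart_part_pre[OF measurable_funpow fmpart_iter_join[OF P]]]
    by (simp add: fmpart_def)
next
  fix i assume i: "i < n + m"
  show "coarser (part_pre M (f ^^ i) P)
      (part_join (iter_join M f P n) (part_pre M (f ^^ n) (iter_join M f P m)))"
  proof (cases "i < n")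
    case True
    then have "coarser (part_pre M (f ^^ i) P) (iter_join M f P n)"
      unfolding iter_join_def by (rule coarser_join_upto)
    then show ?thesis using coarser_part_join_left coarser_trans by blast
  next
    case False
    then obtain j where j: "i = j + n" "j < m" using i by (intro that[of "i - n"]) auto
    then have "coarser (part_pre M (f ^^ i) P) (part_pre M (f ^^ n) (iter_join M f P m))"
      unfolding part_pre_iter_join using coarser_join_upto[of j m "\<lambda>j. part_pre M (f ^^ (j + n)) P"]
      by simp
    then show ?thesis using coarser_part_join_right coarser_trans by blast
  qed
qed

lemma part_entropy_iter_join_add_le:
  assumes P: "fmpart M P"
  shows "part_entropy M (iter_join M f P (n + m))
    \<le> part_entropy M (iter_join M f P n) + part_entropy M (iter_join M f P m)"
proof -
  have P_n: "fmpart M (iter_join M f P n)" and P_m: "fmpart M (iter_join M f P m)"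
    using P by (simp_all add: fmpart_iter_join)
  have shifted: "fmpart M (part_pre M (f ^^ n) (iter_join M f P m))"
    using P_m by (rule fmpart_part_pre[OF measurable_funpow])
  have "part_entropy M (iter_join M f P (n + m))
      \<le> part_entropy M (part_join (iter_join M f P n) (part_pre M (f ^^ n) (iter_join M f P m)))"
    using P P_n shifted
    by (intro part_entropy_mono iter_join_add_coarser fmpart_iter_join fmpart_part_join)
  also have "\<dots> \<le> part_entropy M (iter_join M f P n) + part_entropy M (part_pre M (f ^^ n) (iter_join M f P m))"
    using P_n shifted by (rule part_entropy_part_join_le)
  also have "part_entropy M (part_pre M (f ^^ n) (iter_join M f P m)) = part_entropy M (iter_join M f P m)"
    using P_m by (intro part_entropy_part_pre measure_funpow_vimage)
  finally show ?thesis .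
qed

lemma iter_join_entropy_rate:
  assumes "fmpart M P"
  shows "(\<lambda>n. part_entropy M (iter_join M f P n) / n) \<longlonglongrightarrow> ks_entropy_part M f P"
proof -
  have "convergent (\<lambda>n. part_entropy M (iter_join M f P n) / n)"
    using assms by (intro subadditive_convergent_quotient part_entropy_nonneg part_entropy_iter_join_add_le)
  then show ?thesis unfolding ks_entropy_part_eq_lim convergent_LIMSEQ_iff .
qed

lemma join_upto_part_pre_iter_join_coarser:
  assumes Q: "fmpart M Q"
  shows "coarser (join_upto M n (\<lambda>i. part_pre M (f ^^ i) (iter_join M f Q m))) (iter_join M f Q (n + m))"
proof (rule join_upto_coarser)
  show "\<Union>(iter_join M f Q (n + m)) \<subseteq> space M"
    using fmpart_iter_join[OF Q] by (simp add: fmpart_def)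
  fix i assume "i < n"
  then have "\<And>j. j < m \<Longrightarrow> coarser (part_pre M (f ^^ (j + i)) Q) (iter_join M f Q (n + m))"
    unfolding iter_join_def by (intro coarser_join_upto) simp
  then show "coarser (part_pre M (f ^^ i) (iter_join M f Q m)) (iter_join M f Q (n + m))"
    unfolding part_pre_iter_join using \<open>\<Union>(iter_join M f Q (n + m)) \<subseteq> space M\<close>
    by (intro join_upto_coarser)
qed

lemma fmpart_dyn_join_const_map:
  "(\<And>n. fmpart M (Ps n)) \<Longrightarrow> fmpart M (dyn_join M (\<lambda>_. f) Ps k n)"
  unfolding dyn_join_const_map by (intro fmpart_join_upto fmpart_part_pre[OF measurable_funpow])

lemma dyn_join_coarser_iter_join:
  assumes "fmpart M Q" and "\<And>n. coarser (Ps n) (iter_join M f Q m)"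
  shows "coarser (dyn_join M (\<lambda>_. f) Ps k n) (iter_join M f Q (n + m))"
  unfolding dyn_join_const_map
  using coarser_join_upto_mono[OF coarser_part_pre_mono[OF assms(2)]]
    join_upto_part_pre_iter_join_coarser[OF assms(1)] by (rule coarser_trans)

end

lemma subset_gen_class: "F \<subseteq> gen_class M fs F"
  unfolding gen_class_def by blast

lemma gen_class_subset: "admissible M fs E \<Longrightarrow> F \<subseteq> E \<Longrightarrow> gen_class M fs F \<subseteq> E"
  unfolding gen_class_def by blast

definition iter_join_dominated :: "'a measure \<Rightarrow> ('a \<Rightarrow> 'a) \<Rightarrow> (nat \<Rightarrow> 'a set set) set" where
  "iter_join_dominated M f = {Ps. (\<forall>n. fmpart M (Ps n)) \<and>
      (\<exists>Q m. fmpart M Q \<and> (\<forall>n. coarser (Ps n) (iter_join M f Q m)))}"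

context measure_preserving_system
begin

lemma const_in_iter_join_dominated:
  assumes "fmpart M P" shows "(\<lambda>_. P) \<in> iter_join_dominated M f"
proof -
  have "coarser P (part_pre M (f ^^ 0) P)"
    unfolding coarser_def part_pre_def by auto
  moreover have "coarser (part_pre M (f ^^ 0) P) (iter_join M f P 1)"
    unfolding iter_join_def by (rule coarser_join_upto) simp
  ultimately have "coarser P (iter_join M f P 1)" by (rule coarser_trans)
  then show ?thesis unfolding iter_join_dominated_def using assms by blast
qed

lemma admissible_iter_join_dominated: "admissible M (\<lambda>_. f) (iter_join_dominated M f)"
  unfolding admissible_def
proof (intro conjI ballI allI impI)
  show "iter_join_dominated M f \<noteq> {}"
    using const_in_iter_join_dominated[OF fmpart_space] by blast
next
  fix Ps assume Ps: "Ps \<in> iter_join_dominated M f"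
  then obtain Q m where fmpart_Ps: "\<And>n. fmpart M (Ps n)" and Q: "fmpart M Q"
    and dominated: "\<And>n. coarser (Ps n) (iter_join M f Q m)"
    unfolding iter_join_dominated_def by blast
  show "fmpart M (Ps n)" for n by (rule fmpart_Ps)
  show "\<exists>B. \<forall>n. card (Ps n) \<le> B"
    using card_le_Suc_card_if_coarser[OF fmpart_Ps fmpart_iter_join[OF Q] dominated] by blast
  show "Qs \<in> iter_join_dominated M f" if "\<forall>n. fmpart M (Qs n) \<and> coarser (Qs n) (Ps n)" for Qs
    using that Q dominated coarser_trans unfolding iter_join_dominated_def by blast
  show "(\<lambda>k. dyn_join M (\<lambda>_. f) Ps k m') \<in> iter_join_dominated M f" for m'
  proof -
    have "fmpart M (dyn_join M (\<lambda>_. f) Ps k m')"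
      and "coarser (dyn_join M (\<lambda>_. f) Ps k m') (iter_join M f Q (m' + m))" for k
      using fmpart_dyn_join_const_map[OF fmpart_Ps] dyn_join_coarser_iter_join[OF Q dominated] .
    then show ?thesis using Q unfolding iter_join_dominated_def by blast
  qed
qed

lemma na_entropy_seq_const:
  assumes "fmpart M P"
  shows "na_entropy_seq M (\<lambda>_. f) (\<lambda>_. P) = ks_entropy_part M f P"
  using lim_imp_Limsup[OF trivial_limit_sequentially tendsto_ereal[OF iter_join_entropy_rate[OF assms]]]
  unfolding na_entropy_seq_def dyn_join_const_map iter_join_def by simp

lemma na_entropy_seq_le_ks_entropy:
  assumes "Ps \<in> iter_join_dominated M f"
  shows "na_entropy_seq M (\<lambda>_. f) Ps \<le> ks_entropy M f"
proof -
  obtain Q m where fmpart_Ps: "\<And>n. fmpart M (Ps n)" and Q: "fmpart M Q"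
    and dominated: "\<And>n. coarser (Ps n) (iter_join M f Q m)"
    using assms unfolding iter_join_dominated_def by blast
  define H where "H n = part_entropy M (iter_join M f Q n)" for n
  have bound: "part_entropy M (dyn_join M (\<lambda>_. f) Ps 0 n) / n \<le> H n / n + H m / n" for n
  proof -
    have "part_entropy M (dyn_join M (\<lambda>_. f) Ps 0 n) \<le> H (n + m)"
      unfolding H_def using Q
      by (intro part_entropy_mono fmpart_dyn_join_const_map fmpart_Ps fmpart_iter_join
          dyn_join_coarser_iter_join dominated)
    also have "\<dots> \<le> H n + H m" unfolding H_def using Q by (rule part_entropy_iter_join_add_le)
    finally show ?thesis by (simp add: divide_right_mono flip: add_divide_distrib)
  qed
  have "na_entropy_seq M (\<lambda>_. f) Ps \<le> limsup (\<lambda>n. ereal (H n / n + H m / n))"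
    unfolding na_entropy_seq_def using bound by (intro Limsup_mono always_eventually) simp
  also have "\<dots> = ereal (ks_entropy_part M f Q + 0)"
    unfolding H_def
    by (intro lim_imp_Limsup trivial_limit_sequentially tendsto_ereal tendsto_add
        iter_join_entropy_rate[OF Q] lim_const_over_n)
  also have "\<dots> \<le> ks_entropy M f"
    unfolding ks_entropy_def using Q by (auto intro: SUP_upper)
  finally show ?thesis .
qed

end

theorem mainTheorem12:
  fixes M :: "'a measure" and f :: "'a \<Rightarrow> 'a"
  assumes "prob_space M"
    and "f \<in> M \<rightarrow>\<^sub>M M"
    and "distr M M f = M"
  shows "na_entropy_class M (\<lambda>_. f)
           (gen_class M (\<lambda>_. f) {(\<lambda>_. P) | P. fmpart M P}) = ks_entropy M f"
proof -
  interpret measure_preserving_system M f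
    using assms by (simp add: measure_preserving_system_def measure_preserving_system_axioms_def)
  let ?E = "gen_class M (\<lambda>_. f) {(\<lambda>_. P) | P. fmpart M P}"
  have "?E \<subseteq> iter_join_dominated M f"
    by (rule gen_class_subset[OF admissible_iter_join_dominated])
      (auto intro: const_in_iter_join_dominated)
  then have "na_entropy_class M (\<lambda>_. f) ?E \<le> ks_entropy M f"
    unfolding na_entropy_class_def by (auto intro!: SUP_least na_entropy_seq_le_ks_entropy)
  moreover have "ereal (ks_entropy_part M f P) \<le> na_entropy_class M (\<lambda>_. f) ?E" if "fmpart M P" for P
    unfolding na_entropy_class_def na_entropy_seq_const[OF that, symmetric]
    using that by (auto intro!: SUP_upper subsetD[OF subset_gen_class])
  then have "ks_entropy M f \<le> na_entropy_class M (\<lambda>_. f) ?E"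
    unfolding ks_entropy_def by (auto intro!: SUP_least)
  ultimately show ?thesis by (rule antisym)
qed

end
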